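(* There exists a constant $K>0$ such that for all $i\in\{1,\dots,6\}$ and all $(x,y)\in\mathcal D$, $$\max\big(|x_i(x,y)-z_i(x)|,\ |y_i(x,y)|\big)\le Ky .$$
   Context: Characterizing point: for any triangle (three points of the plane not all equal) there is a similitude mapping it onto a triangle with vertices $(0,0)$, $(1,0)$, $(x,y)$, $0\le x\le1/2$, $y\ge0$, sending its longest edge onto $[(0,0),(1,0)]$ and its shortest edge onto $[(0,0),(x,y)]$; $(x,y)$ is unique and is the characterizing point. $\mathcal D$ is the set of all characterizing points. For $(x,y)\in\mathcal D$ let $A=(0,0)$, $B=(x,y)$, $C=(1,0)$, $D,E,F$ the midpoints of $[A,B],[B,C],[C,A]$ and $G$ the barycenter of $ABC$; set $\mathcal T_1=\{A,D,G\}$, $\mathcal T_2=\{D,B,G\}$, $\mathcal T_3=\{B,E,G\}$, $\mathcal T_4=\{E,C,G\}$, $\mathcal T_5=\{C,F,G\}$, $\mathcal T_6=\{F,A,G\}$, and let $(x_i(x,y),y_i(x,y))$ be the characterizing point of $\mathcal T_i$. Define $z_i(x)=x_i(x,0)$ for $x\in[0,1/2]$. *)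

theory Defs
  imports Complex_Main
begin

definition similitude :: "(complex \<Rightarrow> complex) \<Rightarrow> bool" where
  "similitude f \<longleftrightarrow> (\<exists>a b. a \<noteq> 0 \<and> (f = (\<lambda>z. a * z + b) \<or> f = (\<lambda>z. a * cnj z + b)))"

definition orderings :: "complex \<Rightarrow> complex \<Rightarrow> complex \<Rightarrow> (complex \<times> complex \<times> complex) set" where
  "orderings a b c = {(a,b,c),(a,c,b),(b,a,c),(b,c,a),(c,a,b),(c,b,a)}"

definition is_char_point :: "complex \<Rightarrow> complex \<Rightarrow> complex \<Rightarrow> complex \<Rightarrow> bool" where
  "is_char_point a b c w \<longleftrightarrow>
     0 \<le> Re w \<and> Re w \<le> 1/2 \<and> 0 \<le> Im w \<and>
     (\<exists>f u v t. similitude f \<and> (u, v, t) \<in> orderings a b c \<and>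
        f u = 0 \<and> f t = 1 \<and> f v = w \<and>
        dist u t \<ge> dist u v \<and> dist u t \<ge> dist v t \<and>
        dist u v \<le> dist v t)"

definition char_point :: "complex \<Rightarrow> complex \<Rightarrow> complex \<Rightarrow> complex" where
  "char_point a b c = (THE w. is_char_point a b c w)"

definition char_set :: "complex set" where
  "char_set = {w. \<exists>a b c. \<not> (a = b \<and> b = c) \<and> w = char_point a b c}"

definition subtri :: "nat \<Rightarrow> complex \<Rightarrow> complex \<times> complex \<times> complex" where
  "subtri i w =
    (let A = 0; B = w; C = 1; D = (A + B) / 2; E = (B + C) / 2; F = (C + A) / 2;
         G = (A + B + C) / 3
     in if i = 1 then (A, D, G) else if i = 2 then (D, B, G) else if i = 3 then (B, E, G)
        else if i = 4 then (E, C, G) else if i = 5 then (C, F, G) else (F, A, G))"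

definition sub_char :: "nat \<Rightarrow> real \<Rightarrow> real \<Rightarrow> complex" where
  "sub_char i x y = (case subtri i (Complex x y) of (p, q, r) \<Rightarrow> char_point p q r)"

definition xi :: "nat \<Rightarrow> real \<Rightarrow> real \<Rightarrow> real" where
  "xi i x y = Re (sub_char i x y)"

definition yi :: "nat \<Rightarrow> real \<Rightarrow> real \<Rightarrow> real" where
  "yi i x y = Im (sub_char i x y)"

definition zi :: "nat \<Rightarrow> real \<Rightarrow> real" where
  "zi i x = xi i x 0"

end

theory Submission
  imports Defs
begin

text \<open>A characterizing point has a closed form. If \<open>m \<le> s \<le> M\<close> are the squared side lengths
  of the triangle and \<open>A\<close> is twice its area, the characterizing point is
  \<open>((M + m - s) / (2 M), A / M)\<close>: the abscissa by the law of cosines, the ordinate because the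
  normalising similitude scales areas by \<open>1 / M\<close>. This formula is Lipschitz in the squared sides
  as long as \<open>M\<close> stays away from 0.

  Every vertex of a subtriangle of \<open>(0, x + i y, 1)\<close> has real part independent of \<open>y\<close> and
  imaginary part in \<open>[0, y]\<close>. Flattening to \<open>y = 0\<close> therefore changes each squared side by at
  most \<open>y\<^sup>2\<close>, while a side of length at least \<open>1/4\<close> survives and twice the area is \<open>y / 6\<close>.
  Characterizing points lie in the unit disc, so \<open>y\<^sup>2 \<le> y\<close> and both coordinates move by
  \<open>O(y)\<close>.\<close>

definition sqdist :: "complex \<Rightarrow> complex \<Rightarrow> real" where
  "sqdist p q = (dist p q)\<^sup>2"

definition cross :: "complex \<Rightarrow> complex \<Rightarrow> complex \<Rightarrow> real" where
  "cross p q r = Im (cnj (q - p) * (r - p))"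

definition max_sqdist :: "complex \<Rightarrow> complex \<Rightarrow> complex \<Rightarrow> real" where
  "max_sqdist p q r = max (sqdist p q) (max (sqdist q r) (sqdist r p))"

text \<open>\<open>(M + m - s) / (2 M)\<close>, written symmetrically in the three squared sides.\<close>

definition char_abscissa :: "real \<Rightarrow> real \<Rightarrow> real \<Rightarrow> real" where
  "char_abscissa a b c =
     (2 * max a (max b c) + 2 * min a (min b c) - (a + b + c)) / (2 * max a (max b c))"

definition char_formula :: "complex \<Rightarrow> complex \<Rightarrow> complex \<Rightarrow> complex" where
  "char_formula p q r =
     Complex (char_abscissa (sqdist p q) (sqdist q r) (sqdist r p))
             (\<bar>cross p q r\<bar> / max_sqdist p q r)"

lemma sqdist_nonneg [simp]: "0 \<le> sqdist p q"
  by (simp add: sqdist_def)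

lemma sqdist_commute: "sqdist p q = sqdist q p"
  by (simp add: sqdist_def dist_commute)

lemma sqdist_eq: "sqdist p q = (Re p - Re q)\<^sup>2 + (Im p - Im q)\<^sup>2"
  by (simp add: sqdist_def dist_norm cmod_power2)

lemma sqdist_le_iff: "sqdist p q \<le> sqdist p' q' \<longleftrightarrow> dist p q \<le> dist p' q'"
  by (simp add: sqdist_def)

lemma cross_eq: "cross p q r = (Re q - Re p) * (Im r - Im p) - (Im q - Im p) * (Re r - Re p)"
  by (simp add: cross_def algebra_simps)

lemma cross_rotate: "cross q r p = cross p q r"
  by (simp add: cross_eq algebra_simps)

lemma cross_swap: "cross q p r = - cross p q r"
  by (simp add: cross_eq algebra_simps)

lemma char_abscissa_sorted:
  "a \<le> b \<Longrightarrow> b \<le> c \<Longrightarrow> char_abscissa a b c = (c + a - b) / (2 * c)"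
  by (simp add: char_abscissa_def max_def min_def)

lemma char_abscissa_swap: "char_abscissa a c b = char_abscissa a b c"
  by (simp add: char_abscissa_def max.commute min.commute add.commute add.left_commute)

lemma char_abscissa_rotate: "char_abscissa b c a = char_abscissa a b c"
  by (simp add: char_abscissa_def max.commute max.left_commute min.commute min.left_commute
      add.commute add.left_commute)

lemma max_sqdist_swap: "max_sqdist q p r = max_sqdist p q r"
  by (simp add: max_sqdist_def sqdist_commute max.commute max.left_commute)

lemma max_sqdist_rotate: "max_sqdist q r p = max_sqdist p q r"
  by (simp add: max_sqdist_def max.commute max.left_commute)

lemma char_formula_swap: "char_formula q p r = char_formula p q r"
proof -
  have "char_abscissa (sqdist p q) (sqdist r p) (sqdist q r) =
      char_abscissa (sqdist p q) (sqdist q r) (sqdist r p)"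
    by (rule char_abscissa_swap)
  then show ?thesis
    by (simp add: char_formula_def max_sqdist_swap[of q p r] cross_swap[of q p r]
        sqdist_commute[of q p] sqdist_commute[of p r] sqdist_commute[of r q])
qed

lemma char_formula_rotate: "char_formula q r p = char_formula p q r"
  by (simp add: char_formula_def max_sqdist_rotate cross_rotate char_abscissa_rotate)

lemma char_formula_orderings:
  assumes "(u, v, t) \<in> orderings p q r"
  shows "char_formula u v t = char_formula p q r"
proof -
  have "char_formula p r q = char_formula p q r"
    by (metis char_formula_rotate char_formula_swap)
  with assms show ?thesis
    unfolding orderings_def by (auto simp only: char_formula_rotate char_formula_swap)
qed

lemma similitude_affine: "a \<noteq> 0 \<Longrightarrow> similitude (\<lambda>z. a * z + b)"
  unfolding similitude_def by blast

lemma similitude_cnj: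
  assumes "similitude f"
  shows "similitude (\<lambda>z. cnj (f z))"
proof -
  obtain a b where "a \<noteq> 0" and "f = (\<lambda>z. a * z + b) \<or> f = (\<lambda>z. a * cnj z + b)"
    using assms unfolding similitude_def by blast
  then have "cnj a \<noteq> 0"
    and "(\<lambda>z. cnj (f z)) = (\<lambda>z. cnj a * cnj z + cnj b) \<or>
      (\<lambda>z. cnj (f z)) = (\<lambda>z. cnj a * z + cnj b)"
    by auto
  then show ?thesis
    unfolding similitude_def by blast
qed

lemma similitude_ratio:
  assumes "similitude f" "f u = 0" "f t = 1" "f v = w"
  obtains \<omega> where "\<omega> * (t - u) = v - u" "\<omega> = w \<or> \<omega> = cnj w"
proof -
  obtain a b where f: "f = (\<lambda>z. a * z + b) \<or> f = (\<lambda>z. a * cnj z + b)"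
    using assms(1) unfolding similitude_def by blast
  then show ?thesis
  proof
    assume "f = (\<lambda>z. a * z + b)"
    then have "a * (t - u) = f t - f u" "a * (v - u) = f v - f u"
      by (simp_all add: algebra_simps)
    then have "w * (t - u) = v - u"
      using assms(2-4) by (metis mult.commute mult.left_commute mult_1_right diff_zero)
    then show ?thesis using that by blast
  next
    assume "f = (\<lambda>z. a * cnj z + b)"
    then have "a * cnj (t - u) = f t - f u" "a * cnj (v - u) = f v - f u"
      by (simp_all add: algebra_simps)
    then have "w * cnj (t - u) = cnj (v - u)"
      using assms(2-4) by (metis mult.commute mult.left_commute mult_1_right diff_zero)
    then have "cnj w * (t - u) = v - u"
      by (metis complex_cnj_cnj complex_cnj_mult)
    then show ?thesis using that by blast
  qed
qed

lemma shape_coordinates: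
  assumes ratio: "\<omega> * (t - u) = v - u" and "\<omega> = w \<or> \<omega> = cnj w" and "0 \<le> Im w"
  shows "Re w * sqdist t u = (sqdist v u + sqdist t u - sqdist v t) / 2"
    and "Im w * sqdist t u = \<bar>cross u v t\<bar>"
    and "cmod w * cmod (t - u) = cmod (v - u)"
proof -
  define a b where "a = Re t - Re u" and "b = Im t - Im u"
  have v: "Re v - Re u = Re \<omega> * a - Im \<omega> * b" "Im v - Im u = Re \<omega> * b + Im \<omega> * a"
    using arg_cong[OF ratio, of Re] arg_cong[OF ratio, of Im] by (simp_all add: a_def b_def)
  have vt: "Re v - Re t = Re \<omega> * a - Im \<omega> * b - a" "Im v - Im t = Re \<omega> * b + Im \<omega> * a - b"
    using v by (simp_all add: a_def b_def)
  have w: "Re w = Re \<omega>" "Im w = \<bar>Im \<omega>\<bar>" "cmod w = cmod \<omega>"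
    using assms(2,3) by auto
  show "Re w * sqdist t u = (sqdist v u + sqdist t u - sqdist v t) / 2"
    unfolding sqdist_eq v vt w
    by (simp add: a_def[symmetric] b_def[symmetric] algebra_simps power2_eq_square)
  have "cross u v t = - Im \<omega> * sqdist t u"
    unfolding cross_eq sqdist_eq v
    by (simp add: a_def[symmetric] b_def[symmetric] algebra_simps power2_eq_square)
  then show "Im w * sqdist t u = \<bar>cross u v t\<bar>"
    by (simp add: w abs_mult)
  show "cmod w * cmod (t - u) = cmod (v - u)"
    by (metis ratio w(3) norm_mult)
qed

lemma is_char_point_shape:
  assumes "is_char_point p q r w"
  obtains u v t \<omega> where "(u, v, t) \<in> orderings p q r"
    and "\<omega> * (t - u) = v - u" "\<omega> = w \<or> \<omega> = cnj w" "0 \<le> Im w"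
    and "t \<noteq> u" "sqdist u v \<le> sqdist v t" "sqdist v t \<le> sqdist u t"
proof -
  from assms obtain f u v t where f: "similitude f" "f u = 0" "f t = 1" "f v = w"
    and "(u, v, t) \<in> orderings p q r" "dist u v \<le> dist v t" "dist v t \<le> dist u t" "0 \<le> Im w"
    unfolding is_char_point_def by blast
  moreover obtain \<omega> where "\<omega> * (t - u) = v - u" "\<omega> = w \<or> \<omega> = cnj w"
    using similitude_ratio[OF f] .
  ultimately show ?thesis
    using that[of u v t \<omega>] by (force simp: sqdist_le_iff)
qed

lemma is_char_point_eq_char_formula:
  assumes "is_char_point p q r w"
  shows "w = char_formula p q r"
proof -
  obtain u v t \<omega> where uvt: "(u, v, t) \<in> orderings p q r" and shape: "\<omega> * (t - u) = v - u"
      "\<omega> = w \<or> \<omega> = cnj w" "0 \<le> Im w"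
    and "t \<noteq> u" "sqdist u v \<le> sqdist v t" "sqdist v t \<le> sqdist u t"
    using is_char_point_shape[OF assms] by metis
  then have pos: "0 < sqdist t u" and "max_sqdist u v t = sqdist t u"
    and "char_abscissa (sqdist u v) (sqdist v t) (sqdist t u) =
         (sqdist t u + sqdist u v - sqdist v t) / (2 * sqdist t u)"
    by (simp_all add: char_abscissa_sorted max_sqdist_def sqdist_commute[of t u],
        simp add: sqdist_def)
  moreover have "Re w = (sqdist t u + sqdist u v - sqdist v t) / (2 * sqdist t u)"
    using shape_coordinates(1)[OF shape] pos by (simp add: field_simps sqdist_commute[of v u])
  moreover have "Im w = \<bar>cross u v t\<bar> / sqdist t u"
    using shape_coordinates(2)[OF shape] pos by (simp add: field_simps)
  ultimately have "w = char_formula u v t"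
    by (simp add: char_formula_def complex_eq_iff)
  with uvt show ?thesis
    by (simp add: char_formula_orderings)
qed

lemma is_char_point_norm_le_1:
  assumes "is_char_point p q r w"
  shows "cmod w \<le> 1"
proof -
  obtain u v t \<omega> where shape: "\<omega> * (t - u) = v - u" "\<omega> = w \<or> \<omega> = cnj w" "0 \<le> Im w"
    and "t \<noteq> u" "sqdist u v \<le> sqdist v t" "sqdist v t \<le> sqdist u t"
    using is_char_point_shape[OF assms] by metis
  then have "cmod (v - u) \<le> cmod (t - u)" "0 < cmod (t - u)"
    by (simp_all add: sqdist_def dist_norm norm_minus_commute)
  with shape_coordinates(3)[OF shape] show ?thesis
    by (metis mult_le_cancel_right2 mult.commute)
qed

lemma ex_orderings_sorted:
  "\<exists>(u, v, t) \<in> orderings p q r. dist u v \<le> dist v t \<and> dist v t \<le> dist u t"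
proof -
  have "dist p q \<le> dist q r \<and> dist q r \<le> dist p r \<or> dist q p \<le> dist p r \<and> dist p r \<le> dist q r
      \<or> dist r q \<le> dist q p \<and> dist q p \<le> dist r p \<or> dist q r \<le> dist r p \<and> dist r p \<le> dist q p
      \<or> dist r p \<le> dist p q \<and> dist p q \<le> dist r q \<or> dist p r \<le> dist r q \<and> dist r q \<le> dist p q"
    by (simp add: dist_commute) linarith
  then show ?thesis
    unfolding orderings_def by auto
qed

lemma ex_is_char_point:
  assumes "\<not> (p = q \<and> q = r)"
  shows "\<exists>w. is_char_point p q r w"
proof -
  obtain u v t where uvt: "(u, v, t) \<in> orderings p q r"
    and sorted: "dist u v \<le> dist v t" "dist v t \<le> dist u t"
    using ex_orderings_sorted by blast
  have "t \<noteq> u"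
  proof
    assume "t = u"
    with sorted have "u = v" "v = t" by auto
    with \<open>t = u\<close> uvt assms show False
      unfolding orderings_def by auto
  qed
  define g where "g z = (z - u) / (t - u)" for z
  define f where "f = (if 0 \<le> Im (g v) then g else (\<lambda>z. cnj (g z)))"
  define w where "w = f v"
  have "g = (\<lambda>z. (1 / (t - u)) * z + (- u / (t - u)))"
    by (auto simp: g_def diff_divide_distrib)
  then have "similitude g"
    using similitude_affine[of "1 / (t - u)" "- u / (t - u)"] \<open>t \<noteq> u\<close> by simp
  then have "similitude f"
    by (simp add: f_def similitude_cnj)
  moreover have "f u = 0" "f t = 1" "f v = w"
    using \<open>t \<noteq> u\<close> by (simp_all add: f_def g_def w_def)
  moreover have Im_w: "0 \<le> Im w"
    by (simp add: w_def f_def)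
  moreover have "Re w \<in> {0..1/2}"
  proof -
    have "g v * (t - u) = v - u" "g v = w \<or> g v = cnj w"
      using \<open>t \<noteq> u\<close> by (simp_all add: g_def w_def f_def)
    from shape_coordinates(1)[OF this Im_w]
    have "2 * (Re w * sqdist t u) = sqdist u v + sqdist t u - sqdist v t"
      by (simp add: sqdist_commute)
    moreover have "sqdist u v \<le> sqdist v t" "sqdist v t \<le> sqdist t u" "0 < sqdist t u"
      using sorted \<open>t \<noteq> u\<close> by (simp_all add: sqdist_def dist_commute)
    ultimately have "0 \<le> Re w * sqdist t u \<and> Re w * sqdist t u \<le> 1/2 * sqdist t u \<and>
        0 < sqdist t u"
      using sqdist_nonneg[of u v] by linarith
    then show ?thesis
      using mult_right_le_imp_le[of "Re w" "sqdist t u" "1/2"] by (auto simp: zero_le_mult_iff)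
  qed
  ultimately have "is_char_point p q r w"
    unfolding is_char_point_def using uvt sorted by fastforce
  then show ?thesis ..
qed

lemma char_point_eq_char_formula:
  assumes "\<not> (p = q \<and> q = r)"
  shows "char_point p q r = char_formula p q r"
  unfolding char_point_def
  using ex_is_char_point[OF assms] is_char_point_eq_char_formula by blast

lemma is_char_point_char_point:
  assumes "\<not> (p = q \<and> q = r)"
  shows "is_char_point p q r (char_point p q r)"
  using ex_is_char_point[OF assms] is_char_point_eq_char_formula
    char_point_eq_char_formula[OF assms] by metis

lemma char_set_bounds:
  assumes "w \<in> char_set"
  shows "0 \<le> Re w" "Re w \<le> 1/2" "0 \<le> Im w" "Im w \<le> 1"
proof -
  obtain a b c where w: "is_char_point a b c w"
    using assms is_char_point_char_point unfolding char_set_def by blast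
  then show "0 \<le> Re w" "Re w \<le> 1/2" "0 \<le> Im w"
    unfolding is_char_point_def by auto
  show "Im w \<le> 1"
    using is_char_point_norm_le_1[OF w] abs_Im_le_cmod[of w] by linarith
qed

lemma abs_char_abscissa_diff_le:
  fixes a b c a' b' c' :: real
  assumes "0 \<le> a'" "0 \<le> b'" "0 \<le> c'" "0 < k"
    and "k \<le> max a (max b c)" "k \<le> max a' (max b' c')"
    and "\<bar>a - a'\<bar> \<le> d" "\<bar>b - b'\<bar> \<le> d" "\<bar>c - c'\<bar> \<le> d"
  shows "\<bar>char_abscissa a b c - char_abscissa a' b' c'\<bar> \<le> 4 * d / k"
proof -
  define M M' where "M = max a (max b c)" and "M' = max a' (max b' c')"
  define N N' where "N = 2 * min a (min b c) - (a + b + c)"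
    and "N' = 2 * min a' (min b' c') - (a' + b' + c')"
  have "k \<le> M" "0 < M'"
    using assms(4-6) by (simp_all add: M_def M'_def)
  have "\<bar>M' - M\<bar> \<le> d" "\<bar>N - N'\<bar> \<le> 5 * d"
    using assms(7-9) by (simp_all add: M_def M'_def N_def N'_def abs_le_iff max_def min_def)
  have "\<bar>N'\<bar> \<le> 3 * M'"
    using assms(1-3) by (simp add: N'_def M'_def abs_le_iff max_def min_def)
  then have "\<bar>N' / M' * (M' - M)\<bar> \<le> 3 * d"
    using \<open>0 < M'\<close> \<open>\<bar>M' - M\<bar> \<le> d\<close> mult_mono[of "\<bar>N'\<bar>" "3 * M'" "\<bar>M' - M\<bar>" d]
    by (simp add: abs_mult divide_le_eq mult_ac)
  have "0 < M"
    using \<open>k \<le> M\<close> assms(4) by linarith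
  have "\<bar>N - N' + N' / M' * (M' - M)\<bar> \<le> 5 * d + 3 * d"
    by (rule order_trans[OF abs_triangle_ineq add_mono]) fact+
  have "char_abscissa a b c - char_abscissa a' b' c' = (N - N' + N' / M' * (M' - M)) / (2 * M)"
    using \<open>0 < M\<close> \<open>0 < M'\<close>
    by (simp add: char_abscissa_def M_def M'_def N_def N'_def field_simps)
  then have "\<bar>char_abscissa a b c - char_abscissa a' b' c'\<bar> =
      \<bar>N - N' + N' / M' * (M' - M)\<bar> / (2 * M)"
    unfolding abs_divide abs_mult using \<open>0 < M\<close> by simp
  also have "\<dots> \<le> (5 * d + 3 * d) / (2 * M)"
    by (rule divide_right_mono) (use \<open>0 < M\<close> \<open>\<bar>N - N' + _\<bar> \<le> _\<close> in auto)
  also have "\<dots> \<le> 4 * d / k"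
    using \<open>k \<le> M\<close> assms(4) \<open>\<bar>M' - M\<bar> \<le> d\<close>
    by (simp add: frac_le)
  finally show ?thesis .
qed

lemma nondegenerate_if_max_sqdist_pos: "0 < max_sqdist p q r \<Longrightarrow> \<not> (p = q \<and> q = r)"
  by (auto simp: max_sqdist_def sqdist_def)

lemma abs_Re_char_point_diff_le:
  assumes "0 < k" "k \<le> max_sqdist p q r" "k \<le> max_sqdist p' q' r'"
    and "\<bar>sqdist p q - sqdist p' q'\<bar> \<le> d" "\<bar>sqdist q r - sqdist q' r'\<bar> \<le> d"
    and "\<bar>sqdist r p - sqdist r' p'\<bar> \<le> d"
  shows "\<bar>Re (char_point p q r) - Re (char_point p' q' r')\<bar> \<le> 4 * d / k"
proof -
  have "char_point p q r = char_formula p q r" "char_point p' q' r' = char_formula p' q' r'"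
    using assms(1-3) by (simp_all add: char_point_eq_char_formula nondegenerate_if_max_sqdist_pos)
  with assms show ?thesis
    by (simp add: char_formula_def max_sqdist_def abs_char_abscissa_diff_le)
qed

lemma abs_Im_char_point_le:
  assumes "0 < k" "k \<le> max_sqdist p q r"
  shows "\<bar>Im (char_point p q r)\<bar> \<le> \<bar>cross p q r\<bar> / k"
proof -
  have "char_point p q r = char_formula p q r"
    using assms by (simp add: char_point_eq_char_formula nondegenerate_if_max_sqdist_pos)
  with assms show ?thesis
    by (simp add: char_formula_def divide_left_mono)
qed

lemma sqdist_eq_real_projection:
  "sqdist p q = sqdist (of_real (Re p)) (of_real (Re q)) + (Im p - Im q)\<^sup>2"
  by (simp add: sqdist_eq)

lemma max_sqdist_real_projection_le:
  "max_sqdist (of_real (Re p)) (of_real (Re q)) (of_real (Re r)) \<le> max_sqdist p q r"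
proof -
  have "sqdist (of_real (Re a)) (of_real (Re b)) \<le> sqdist a b" for a b
    by (simp add: sqdist_eq_real_projection[of a b])
  then show ?thesis
    unfolding max_sqdist_def by (intro max.mono)
qed

lemma abs_Re_char_point_real_projection_le:
  assumes "0 < k" "k \<le> max_sqdist (of_real (Re p)) (of_real (Re q)) (of_real (Re r))"
    and "Im p \<in> {0..y}" "Im q \<in> {0..y}" "Im r \<in> {0..y}"
  shows "\<bar>Re (char_point p q r) -
      Re (char_point (of_real (Re p)) (of_real (Re q)) (of_real (Re r)))\<bar> \<le> 4 * y\<^sup>2 / k"
proof (rule abs_Re_char_point_diff_le)
  have "(Im a - Im b)\<^sup>2 \<le> y\<^sup>2" if "a \<in> {p, q, r}" "b \<in> {p, q, r}" for a b
    using that assms(3-5) by (auto simp: abs_le_square_iff[symmetric] abs_le_iff)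
  then show "\<bar>sqdist p q - sqdist (of_real (Re p)) (of_real (Re q))\<bar> \<le> y\<^sup>2"
    "\<bar>sqdist q r - sqdist (of_real (Re q)) (of_real (Re r))\<bar> \<le> y\<^sup>2"
    "\<bar>sqdist r p - sqdist (of_real (Re r)) (of_real (Re p))\<bar> \<le> y\<^sup>2"
    by (simp_all add: sqdist_eq_real_projection[of p q] sqdist_eq_real_projection[of q r]
        sqdist_eq_real_projection[of r p])
  show "k \<le> max_sqdist p q r"
    using assms(2) max_sqdist_real_projection_le by (rule order_trans)
qed (use assms in simp_all)

lemma subtri_cases:
  obtains "\<And>w. subtri i w = (0, w / 2, (w + 1) / 3)"
    | "\<And>w. subtri i w = (w / 2, w, (w + 1) / 3)"
    | "\<And>w. subtri i w = (w, (w + 1) / 2, (w + 1) / 3)"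
    | "\<And>w. subtri i w = ((w + 1) / 2, 1, (w + 1) / 3)"
    | "\<And>w. subtri i w = (1, 1 / 2, (w + 1) / 3)"
    | "\<And>w. subtri i w = (1 / 2, 0, (w + 1) / 3)"
proof -
  consider "i = 1" | "i = 2" | "i = 3" | "i = 4" | "i = 5"
    | "i \<noteq> 1" "i \<noteq> 2" "i \<noteq> 3" "i \<noteq> 4" "i \<noteq> 5"
    by blast
  then show ?thesis
    by cases (simp_all add: that subtri_def Let_def add.commute)
qed

lemma subtri_real_projection:
  "subtri i (of_real x) =
     (case subtri i (Complex x y) of (p, q, r) \<Rightarrow> (of_real (Re p), of_real (Re q), of_real (Re r)))"
  by (cases rule: subtri_cases[of i]) (simp_all add: complex_eq_iff)

lemma Im_subtri:
  assumes "0 \<le> y"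
  shows "case subtri i (Complex x y) of (p, q, r) \<Rightarrow>
    Im p \<in> {0..y} \<and> Im q \<in> {0..y} \<and> Im r \<in> {0..y}"
  using assms by (cases rule: subtri_cases[of i]) simp_all

text \<open>The medians cut the triangle of area \<open>y / 2\<close> into six triangles of equal area.\<close>

lemma abs_cross_subtri:
  assumes "0 \<le> y"
  shows "(case subtri i (Complex x y) of (p, q, r) \<Rightarrow> \<bar>cross p q r\<bar>) = y / 6"
  using assms by (cases rule: subtri_cases[of i]) (simp_all add: cross_eq field_simps)

lemma max_sqdist_ge_square:
  assumes "0 \<le> c" "c \<le> dist p q \<or> c \<le> dist q r \<or> c \<le> dist r p"
  shows "c\<^sup>2 \<le> max_sqdist p q r"
  using assms by (auto simp: max_sqdist_def sqdist_def le_max_iff_disj intro: power_mono)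

lemma max_sqdist_subtri_real:
  assumes "0 \<le> x" "x \<le> 1/2"
  shows "case subtri i (of_real x) of (p, q, r) \<Rightarrow> 1/16 \<le> max_sqdist p q r"
proof -
  have "case subtri i (of_real x) of (p, q, r) \<Rightarrow>
      1/4 \<le> dist p q \<or> 1/4 \<le> dist q r \<or> 1/4 \<le> dist r p"
    using assms
    by (cases rule: subtri_cases[of i]) (simp_all add: dist_norm cmod_eq_Re field_simps)
  then show ?thesis
    using max_sqdist_ge_square[of "1/4"] by (auto simp: power2_eq_square split: prod.splits)
qed

theorem lemma7:
  shows "\<exists>K>0. \<forall>i\<in>{1..6::nat}. \<forall>x y. Complex x y \<in> char_set \<longrightarrow>
           max \<bar>xi i x y - zi i x\<bar> \<bar>yi i x y\<bar> \<le> K * y"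
proof (intro exI[of _ 64] conjI ballI allI impI)
  fix i :: nat and x y :: real
  assume "Complex x y \<in> char_set"
  then have x: "0 \<le> x" "x \<le> 1/2" and y: "0 \<le> y" "y \<le> 1"
    using char_set_bounds[of "Complex x y"] by simp_all
  obtain p q r where T: "subtri i (Complex x y) = (p, q, r)"
    using prod_cases3 by blast
  have T0: "subtri i (Complex x 0) = (of_real (Re p), of_real (Re q), of_real (Re r))"
    using subtri_real_projection[of i x y] T by (simp add: complex_of_real_def)
  have k: "1/16 \<le> max_sqdist (of_real (Re p)) (of_real (Re q)) (of_real (Re r))"
    using max_sqdist_subtri_real[OF x, of i] T0 by (simp add: complex_of_real_def)
  have "\<bar>xi i x y - zi i x\<bar> \<le> 4 * y\<^sup>2 / (1/16)"
    using abs_Re_char_point_real_projection_le[of "1/16", OF _ k] Im_subtri[OF y(1), of i x] T T0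
    by (simp add: xi_def zi_def sub_char_def)
  also have "\<dots> \<le> 64 * y"
    using y by (simp add: power2_eq_square mult_left_le)
  finally have "\<bar>xi i x y - zi i x\<bar> \<le> 64 * y" .
  moreover have "\<bar>yi i x y\<bar> \<le> (y / 6) / (1/16)"
    using abs_Im_char_point_le[of "1/16" p q r] k max_sqdist_real_projection_le[of p q r]
      abs_cross_subtri[OF y(1), of i x] T
    by (simp add: yi_def sub_char_def)
  then have "\<bar>yi i x y\<bar> \<le> 64 * y"
    using y by simp
  ultimately show "max \<bar>xi i x y - zi i x\<bar> \<bar>yi i x y\<bar> \<le> 64 * y"
    by simp
qed simp

end
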